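(* Let $G$ be a graph and let $G_1,\dots,G_k$ be subgraphs of $G$ such that (i) the edge sets $E(G_1),\dots,E(G_k)$ are mutually disjoint; (ii) for each $i$, every maximal clique of $G_i$ is also a maximal clique of $G$; (iii) for each $i$, any maximal clique of $G$ belonging to $G_i$ and any maximal clique of $G$ not belonging to $G_i$ share at most one vertex. Then $p(G) \ge \sum_{i=1}^k p(G_i)$.
   Context: All graphs are finite and simple. For an acyclic digraph $D$, the phylogeny graph $P(D)$ is the graph on $V(D)$ in which distinct vertices $u,v$ are adjacent if and only if $(u,v)\in A(D)$, or $(v,u)\in A(D)$, or there is a vertex $w$ with $(u,w),(v,w)\in A(D)$. A phylogeny digraph for a graph $G$ is an acyclic digraph $D$ such that $G$ is an induced subgraph of $P(D)$ and $D$ has no arc from a vertex of $V(D)\setminus V(G)$ to a vertex of $V(G)$. The phylogeny number $p(G)$ is the minimum of $|V(D)\setminus V(G)|$ over all phylogeny digraphs $D$ for $G$. A clique of $G$ "belongs to $G_i$" if it is a clique of $G_i$. *)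

theory Defs
  imports Main
begin

definition graph :: "'a set \<Rightarrow> 'a set set \<Rightarrow> bool" where
  "graph V E \<longleftrightarrow> finite V \<and> E \<subseteq> {{u, v} | u v. u \<in> V \<and> v \<in> V \<and> u \<noteq> v}"

definition subgraph :: "'a set \<Rightarrow> 'a set set \<Rightarrow> 'a set \<Rightarrow> 'a set set \<Rightarrow> bool" where
  "subgraph V' E' V E \<longleftrightarrow> graph V' E' \<and> V' \<subseteq> V \<and> E' \<subseteq> E"

definition clique :: "'a set \<Rightarrow> 'a set set \<Rightarrow> 'a set \<Rightarrow> bool" where
  "clique V E C \<longleftrightarrow> C \<subseteq> V \<and> (\<forall>u\<in>C. \<forall>v\<in>C. u \<noteq> v \<longrightarrow> {u, v} \<in> E)"

definition maximal_clique :: "'a set \<Rightarrow> 'a set set \<Rightarrow> 'a set \<Rightarrow> bool" where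
  "maximal_clique V E C \<longleftrightarrow> clique V E C \<and> (\<forall>C'. clique V E C' \<and> C \<subseteq> C' \<longrightarrow> C' = C)"

definition phylo_adj :: "('b \<times> 'b) set \<Rightarrow> 'b \<Rightarrow> 'b \<Rightarrow> bool" where
  "phylo_adj A u v \<longleftrightarrow> u \<noteq> v \<and>
     ((u, v) \<in> A \<or> (v, u) \<in> A \<or> (\<exists>w. (u, w) \<in> A \<and> (v, w) \<in> A))"

text \<open>A phylogeny digraph for G=(V,E) whose vertex set is the (copy Inl of) V together
  with exactly k extra vertices Inr 0, ..., Inr (k-1).\<close>
definition phylo_digraph :: "'a set \<Rightarrow> 'a set set \<Rightarrow> nat \<Rightarrow> ('a + nat) rel \<Rightarrow> bool" where
  "phylo_digraph V E k A \<longleftrightarrow>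
     A \<subseteq> (Inl ` V \<union> Inr ` {..<k}) \<times> (Inl ` V \<union> Inr ` {..<k}) \<and>
     acyclic A \<and>
     (\<forall>u\<in>V. \<forall>v\<in>V. u \<noteq> v \<longrightarrow> ({u, v} \<in> E \<longleftrightarrow> phylo_adj A (Inl u) (Inl v))) \<and>
     (\<forall>x y. (x, y) \<in> A \<and> x \<notin> Inl ` V \<longrightarrow> y \<notin> Inl ` V)"

definition phylogeny_number :: "'a set \<Rightarrow> 'a set set \<Rightarrow> nat" where
  "phylogeny_number V E = (LEAST k. \<exists>A. phylo_digraph V E k A)"

end

theory Submission
  imports Defs
begin

text \<open>Let \<open>D\<close> be a phylogeny digraph of \<open>G\<close> with \<open>p(G)\<close> extra vertices. Two original
  vertices are adjacent in \<open>P(D)\<close> exactly when they lie together in the closed in-neighbourhood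
  of some vertex of \<open>D\<close>, and each such neighbourhood is a clique of \<open>G\<close>. Hypotheses (ii) and (iii)
  force every clique of \<open>G\<close> that contains an edge of \<open>G\<^sub>i\<close> to be a clique of \<open>G\<^sub>i\<close>. Hence keeping
  only the arcs into vertices whose closed in-neighbourhood is a clique of \<open>G\<^sub>i\<close> yields a phylogeny
  digraph of \<open>G\<^sub>i\<close>, whose extra vertices are those extra vertices of \<open>D\<close> whose in-neighbourhood
  contains an edge of \<open>G\<^sub>i\<close>. As the \<open>E(G\<^sub>i)\<close> are disjoint, distinct \<open>G\<^sub>i\<close> use disjoint sets of
  extra vertices of \<open>D\<close>.\<close>

lemma clique_subset: "clique V E M \<Longrightarrow> Q \<subseteq> M \<Longrightarrow> clique V E Q"
  unfolding clique_def by blast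

lemma graph_edgeE:
  assumes "graph V E" "e \<in> E"
  obtains u v where "e = {u, v}" "u \<in> V" "v \<in> V" "u \<noteq> v"
  using assms unfolding graph_def by blast

lemma ex_maximal_clique_superset:
  assumes "finite V" "clique V E C"
  shows "\<exists>M. maximal_clique V E M \<and> C \<subseteq> M"
proof -
  let ?S = "{M. clique V E M \<and> C \<subseteq> M}"
  have "finite ?S"
    using assms(1) by (intro finite_subset[of ?S "Pow V"]) (auto simp: clique_def)
  then obtain M where "M \<in> ?S" "\<forall>M'\<in>?S. M \<subseteq> M' \<longrightarrow> M = M'"
    using finite_has_maximal2[of ?S C] assms(2) by blast
  then show ?thesis unfolding maximal_clique_def by blast
qed

lemma clique_through_subgraph_edge:
  assumes "finite V" "subgraph V' E' V E"
    and maximal: "\<And>C. maximal_clique V' E' C \<Longrightarrow> maximal_clique V E C"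
    and separated: "\<And>C D. maximal_clique V E C \<Longrightarrow> clique V' E' C \<Longrightarrow>
          maximal_clique V E D \<Longrightarrow> \<not> clique V' E' D \<Longrightarrow> card (C \<inter> D) \<le> 1"
    and "clique V E Q" "e \<in> E'" "e \<subseteq> Q"
  shows "clique V' E' Q"
proof -
  have "graph V' E'" "finite V'" using assms(2) by (auto simp: subgraph_def graph_def)
  obtain u v where e: "e = {u, v}" "u \<in> V'" "v \<in> V'" "u \<noteq> v"
    using \<open>graph V' E'\<close> \<open>e \<in> E'\<close> by (rule graph_edgeE)
  have "clique V' E' e"
    using e \<open>e \<in> E'\<close> unfolding clique_def by (auto simp: insert_commute)
  then obtain C where C: "maximal_clique V' E' C" "e \<subseteq> C"
    using ex_maximal_clique_superset \<open>finite V'\<close> by blast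
  obtain D where D: "maximal_clique V E D" "Q \<subseteq> D"
    using ex_maximal_clique_superset assms(1,5) by blast
  have "clique V' E' D"
  proof (rule ccontr)
    assume "\<not> clique V' E' D"
    then have "card (C \<inter> D) \<le> 1"
      using separated maximal C D by (auto simp: maximal_clique_def)
    moreover have "finite (C \<inter> D)"
      using C(1) \<open>finite V'\<close> by (auto simp: maximal_clique_def clique_def intro: finite_subset)
    then have "card e \<le> card (C \<inter> D)"
      using C(2) D(2) \<open>e \<subseteq> Q\<close> by (intro card_mono) auto
    ultimately show False using e by simp
  qed
  then show ?thesis using D(2) by (rule clique_subset)
qed

lemma acyclic_if_arcs_into_tails:
  assumes "acyclic A" and tails: "Domain B \<subseteq> S" and into: "B \<inter> UNIV \<times> S \<subseteq> A"
  shows "acyclic B"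
proof (rule acyclicI, intro allI notI)
  have path: "(x, y) \<in> A\<^sup>+" if "(x, y) \<in> B\<^sup>+" "y \<in> S" for x y
    using that
  proof (induction rule: trancl_induct)
    case (base y)
    then show ?case using into by blast
  next
    case (step y z)
    then have "y \<in> S" using tails by blast
    with step show ?case using into by (blast intro: trancl_into_trancl)
  qed
  fix x assume cycle: "(x, x) \<in> B\<^sup>+"
  then have "x \<in> S" using tails by (blast dest: tranclD)
  then show False using cycle path \<open>acyclic A\<close> unfolding acyclic_def by blast
qed

text \<open>One extra vertex per edge, with arcs from both ends of the edge.\<close>

lemma graph_has_phylo_digraph:
  assumes "graph V E"
  shows "\<exists>A. phylo_digraph V E (card E) A"
proof -
  have edges: "E \<subseteq> {{u, v} | u v. u \<in> V \<and> v \<in> V \<and> u \<noteq> v}" and "finite V"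
    using assms by (auto simp: graph_def)
  then have "E \<subseteq> Pow V" "finite E" by (auto intro: finite_subset[of E "Pow V"])
  then obtain f where f: "bij_betw f {..<card E} E"
    using ex_bij_betw_nat_finite by (fastforce simp: atLeast0LessThan)
  have ends: "f n \<subseteq> V" if "n < card E" for n
    using f that \<open>E \<subseteq> Pow V\<close> by (auto simp: bij_betw_def)
  define A :: "('a + nat) rel" where "A = {(Inl u, Inr n) | u n. n < card E \<and> u \<in> f n}"
  have "phylo_adj A (Inl u) (Inl v) \<longleftrightarrow> {u, v} \<in> E" if "u \<noteq> v" for u v
  proof
    assume "phylo_adj A (Inl u) (Inl v)"
    then obtain n where n: "n < card E" "u \<in> f n" "v \<in> f n"
      by (auto simp: phylo_adj_def A_def)
    then have "f n \<in> E" using f by (auto simp: bij_betw_def)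
    moreover obtain a b where "f n = {a, b}"
      using assms \<open>f n \<in> E\<close> by (rule graph_edgeE)
    ultimately show "{u, v} \<in> E" using n \<open>u \<noteq> v\<close> by (auto simp: doubleton_eq_iff insert_commute)
  next
    assume "{u, v} \<in> E"
    then obtain n where "n < card E" "f n = {u, v}"
      using f unfolding bij_betw_def by (metis imageE lessThan_iff)
    then show "phylo_adj A (Inl u) (Inl v)" using \<open>u \<noteq> v\<close> by (auto simp: phylo_adj_def A_def)
  qed
  moreover have "acyclic A"
    by (rule acyclic_if_arcs_into_tails[of "{}" _ "range Inl"]) (auto simp: A_def acyclic_def)
  moreover have "A \<subseteq> (Inl ` V \<union> Inr ` {..<card E}) \<times> (Inl ` V \<union> Inr ` {..<card E})"
    using ends by (auto simp: A_def)
  ultimately have "phylo_digraph V E (card E) A"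
    unfolding phylo_digraph_def by (auto simp: A_def)
  then show ?thesis ..
qed

lemma phylogeny_number_attained:
  assumes "graph V E"
  shows "\<exists>A. phylo_digraph V E (phylogeny_number V E) A"
  unfolding phylogeny_number_def
  by (rule LeastI_ex[where P = "\<lambda>k. \<exists>A. phylo_digraph V E k A"])
    (use graph_has_phylo_digraph[OF assms] in blast)

lemma phylogeny_number_le: "phylo_digraph V E k A \<Longrightarrow> phylogeny_number V E \<le> k"
  unfolding phylogeny_number_def by (blast intro: Least_le)

definition closed_in_nbhd :: "('a + nat) rel \<Rightarrow> 'a + nat \<Rightarrow> 'a set" where
  "closed_in_nbhd A y = {u. (Inl u, y) \<in> A} \<union> {v. y = Inl v}"

lemma phylo_adj_Inl_iff:
  "phylo_adj A (Inl u) (Inl v) \<longleftrightarrow>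
     u \<noteq> v \<and> (\<exists>y. u \<in> closed_in_nbhd A y \<and> v \<in> closed_in_nbhd A y)"
  unfolding phylo_adj_def closed_in_nbhd_def by blast

lemma phylo_digraph_edge_iff:
  "phylo_digraph V E m A \<Longrightarrow> u \<in> V \<Longrightarrow> v \<in> V \<Longrightarrow> u \<noteq> v \<Longrightarrow>
     {u, v} \<in> E \<longleftrightarrow> phylo_adj A (Inl u) (Inl v)"
  unfolding phylo_digraph_def by blast

lemma closed_in_nbhd_clique:
  assumes "phylo_digraph V E m A" "y \<in> Inl ` V \<union> Inr ` {..<m}"
  shows "clique V E (closed_in_nbhd A y)"
  unfolding clique_def
proof (intro conjI ballI impI)
  show sub: "closed_in_nbhd A y \<subseteq> V"
  proof
    fix u assume "u \<in> closed_in_nbhd A y"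
    then have "(Inl u, y) \<in> A \<or> y = Inl u" by (simp add: closed_in_nbhd_def)
    then show "u \<in> V" using assms unfolding phylo_digraph_def by auto
  qed
  fix u v assume uv: "u \<in> closed_in_nbhd A y" "v \<in> closed_in_nbhd A y" "u \<noteq> v"
  then have "phylo_adj A (Inl u) (Inl v)" unfolding phylo_adj_Inl_iff by blast
  then show "{u, v} \<in> E" using phylo_digraph_edge_iff[OF assms(1)] sub uv by blast
qed

definition subgraph_extras :: "'a set \<Rightarrow> 'a set set \<Rightarrow> nat \<Rightarrow> ('a + nat) rel \<Rightarrow> nat set" where
  "subgraph_extras V' E' m A =
     {z \<in> {..<m}. clique V' E' (closed_in_nbhd A (Inr z)) \<and> (\<exists>e\<in>E'. e \<subseteq> closed_in_nbhd A (Inr z))}"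

text \<open>The kept extra vertices \<open>Z\<close> are renumbered by \<open>r\<close> to fit the encoding of extra
  vertices as \<open>Inr 0, \<dots>, Inr (n - 1)\<close>.\<close>

definition restrict_arcs ::
    "'a set \<Rightarrow> 'a set set \<Rightarrow> nat set \<Rightarrow> (nat \<Rightarrow> nat) \<Rightarrow> ('a + nat) rel \<Rightarrow> ('a + nat) rel" where
  "restrict_arcs V' E' Z r A =
     {(Inl u, Inl v) | u v. (Inl u, Inl v) \<in> A \<and> clique V' E' (closed_in_nbhd A (Inl v))} \<union>
     {(Inl u, Inr (r z)) | u z. (Inl u, Inr z) \<in> A \<and> z \<in> Z}"

lemma subgraph_extras_disjoint:
  assumes "graph V\<^sub>1 E\<^sub>1" "E\<^sub>1 \<inter> E\<^sub>2 = {}"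
  shows "subgraph_extras V\<^sub>1 E\<^sub>1 m A \<inter> subgraph_extras V\<^sub>2 E\<^sub>2 m A = {}"
proof -
  have False if z: "z \<in> subgraph_extras V\<^sub>1 E\<^sub>1 m A" "z \<in> subgraph_extras V\<^sub>2 E\<^sub>2 m A" for z
  proof -
    obtain e where "e \<in> E\<^sub>1" "e \<subseteq> closed_in_nbhd A (Inr z)"
      using z(1) by (auto simp: subgraph_extras_def)
    moreover obtain u v where "e = {u, v}" "u \<noteq> v"
      using assms(1) \<open>e \<in> E\<^sub>1\<close> by (rule graph_edgeE)
    moreover have "clique V\<^sub>2 E\<^sub>2 (closed_in_nbhd A (Inr z))"
      using z(2) by (simp add: subgraph_extras_def)
    ultimately show False using assms(2) unfolding clique_def by blast
  qed
  then show ?thesis by blast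
qed

lemma restrict_arcs_sound:
  assumes r: "inj_on r Z"
    and Z: "\<And>z. z \<in> Z \<Longrightarrow> clique V' E' (closed_in_nbhd A (Inr z))"
    and "u \<in> closed_in_nbhd (restrict_arcs V' E' Z r A) y"
        "v \<in> closed_in_nbhd (restrict_arcs V' E' Z r A) y" "u \<noteq> v"
  shows "{u, v} \<in> E'"
proof (cases y)
  case (Inl x)
  then have "clique V' E' (closed_in_nbhd A (Inl x))" "u \<in> closed_in_nbhd A (Inl x)"
      "v \<in> closed_in_nbhd A (Inl x)"
    using assms(3-5) by (auto simp: closed_in_nbhd_def restrict_arcs_def)
  then show ?thesis using \<open>u \<noteq> v\<close> by (auto simp: clique_def)
next
  case (Inr n)
  then obtain z z' where "z \<in> Z" "z' \<in> Z" "r z = r z'"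
      "u \<in> closed_in_nbhd A (Inr z)" "v \<in> closed_in_nbhd A (Inr z')"
    using assms(3,4) by (auto simp: closed_in_nbhd_def restrict_arcs_def)
  moreover from this have "z = z'" using r by (auto dest: inj_onD)
  ultimately show ?thesis using Z \<open>u \<noteq> v\<close> by (auto simp: clique_def)
qed

lemma restrict_arcs_complete:
  assumes "phylo_digraph V E m A"
    and edge_cliques: "\<And>Q e. clique V E Q \<Longrightarrow> e \<in> E' \<Longrightarrow> e \<subseteq> Q \<Longrightarrow> clique V' E' Q"
    and "u \<in> closed_in_nbhd A y" "v \<in> closed_in_nbhd A y" "{u, v} \<in> E'" "u \<noteq> v"
  shows "\<exists>y'. u \<in> closed_in_nbhd (restrict_arcs V' E' (subgraph_extras V' E' m A) r A) y' \<and>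
              v \<in> closed_in_nbhd (restrict_arcs V' E' (subgraph_extras V' E' m A) r A) y'"
proof -
  have "y \<in> Inl ` V \<union> Inr ` {..<m}"
    using assms(1,3,4,6) unfolding phylo_digraph_def closed_in_nbhd_def by blast
  with assms(1) have "clique V E (closed_in_nbhd A y)" by (rule closed_in_nbhd_clique)
  then have clique': "clique V' E' (closed_in_nbhd A y)" using edge_cliques assms(3-5) by blast
  show ?thesis
  proof (cases y)
    case (Inl x)
    then show ?thesis
      using clique' assms(3,4) by (auto simp: closed_in_nbhd_def restrict_arcs_def)
  next
    case (Inr z)
    then have "z \<in> subgraph_extras V' E' m A"
      using clique' assms(3-5) \<open>y \<in> _\<close>
      by (auto simp: subgraph_extras_def intro!: bexI[of _ "{u, v}"])
    then show ?thesis
      using Inr assms(3,4) by (auto simp: closed_in_nbhd_def restrict_arcs_def)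
  qed
qed

lemma restrict_arcs_vertices:
  assumes "r ` Z = {..<n}" and "\<And>z. z \<in> Z \<Longrightarrow> clique V' E' (closed_in_nbhd A (Inr z))"
  shows "restrict_arcs V' E' Z r A \<subseteq> Inl ` V' \<times> (Inl ` V' \<union> Inr ` {..<n})"
proof
  fix p assume "p \<in> restrict_arcs V' E' Z r A"
  then consider (original) u v where "p = (Inl u, Inl v)" "(Inl u, Inl v) \<in> A"
      "clique V' E' (closed_in_nbhd A (Inl v))"
    | (extra) u z where "p = (Inl u, Inr (r z))" "(Inl u, Inr z) \<in> A" "z \<in> Z"
    unfolding restrict_arcs_def by blast
  then show "p \<in> Inl ` V' \<times> (Inl ` V' \<union> Inr ` {..<n})"
  proof cases
    case original
    then have "u \<in> V'" "v \<in> V'" by (auto simp: clique_def closed_in_nbhd_def)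
    then show ?thesis using original by blast
  next
    case extra
    then have "u \<in> V'" using assms(2) by (auto simp: clique_def closed_in_nbhd_def)
    moreover have "r z < n" using assms(1) extra by blast
    ultimately show ?thesis using extra by blast
  qed
qed

lemma phylogeny_number_subgraph_le:
  assumes "phylo_digraph V E m A" "subgraph V' E' V E"
    and edge_cliques: "\<And>Q e. clique V E Q \<Longrightarrow> e \<in> E' \<Longrightarrow> e \<subseteq> Q \<Longrightarrow> clique V' E' Q"
  shows "phylogeny_number V' E' \<le> card (subgraph_extras V' E' m A)"
proof -
  define Z where "Z = subgraph_extras V' E' m A"
  have "finite Z" by (simp add: Z_def subgraph_extras_def)
  then obtain r where r: "bij_betw r Z {..<card Z}"
    using ex_bij_betw_finite_nat by (fastforce simp: atLeast0LessThan)
  define A' where "A' = restrict_arcs V' E' Z r A"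
  have Z_clique: "\<And>z. z \<in> Z \<Longrightarrow> clique V' E' (closed_in_nbhd A (Inr z))"
    by (simp add: Z_def subgraph_extras_def)
  have "V' \<subseteq> V" "E' \<subseteq> E" using assms(2) by (auto simp: subgraph_def)
  have adjacency: "\<forall>u\<in>V'. \<forall>v\<in>V'. u \<noteq> v \<longrightarrow> ({u, v} \<in> E' \<longleftrightarrow> phylo_adj A' (Inl u) (Inl v))"
  proof (intro ballI impI iffI)
    fix u v assume "u \<noteq> v" and "phylo_adj A' (Inl u) (Inl v)"
    then show "{u, v} \<in> E'"
      using restrict_arcs_sound[OF bij_betw_imp_inj_on[OF r] Z_clique]
      unfolding phylo_adj_Inl_iff A'_def by blast
  next
    fix u v assume uv: "u \<in> V'" "v \<in> V'" "u \<noteq> v" and "{u, v} \<in> E'"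
    then have "phylo_adj A (Inl u) (Inl v)"
      using phylo_digraph_edge_iff[OF assms(1)] \<open>V' \<subseteq> V\<close> \<open>E' \<subseteq> E\<close> by blast
    then obtain y where y: "u \<in> closed_in_nbhd A y" "v \<in> closed_in_nbhd A y"
      unfolding phylo_adj_Inl_iff by blast
    have "\<exists>y'. u \<in> closed_in_nbhd A' y' \<and> v \<in> closed_in_nbhd A' y'"
      unfolding A'_def Z_def using assms(1) edge_cliques y \<open>{u, v} \<in> E'\<close> uv(3)
      by (rule restrict_arcs_complete)
    then show "phylo_adj A' (Inl u) (Inl v)"
      unfolding phylo_adj_Inl_iff using uv(3) by blast
  qed
  have "acyclic A" using assms(1) by (simp add: phylo_digraph_def)
  then have "acyclic A'"
    by (rule acyclic_if_arcs_into_tails[of A _ "range Inl"]) (auto simp: A'_def restrict_arcs_def)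
  moreover have "A' \<subseteq> Inl ` V' \<times> (Inl ` V' \<union> Inr ` {..<card Z})"
    unfolding A'_def using bij_betw_imp_surj_on[OF r] Z_clique by (rule restrict_arcs_vertices)
  ultimately have "phylo_digraph V' E' (card Z) A'"
    using adjacency unfolding phylo_digraph_def by (intro conjI) blast+
  then show ?thesis unfolding Z_def by (rule phylogeny_number_le)
qed

theorem mainTheorem2:
  fixes V :: "'a set" and E :: "'a set set"
    and Vs :: "nat \<Rightarrow> 'a set" and Es :: "nat \<Rightarrow> 'a set set" and k :: nat
  assumes "graph V E"
    and "\<forall>i\<in>{1..k}. subgraph (Vs i) (Es i) V E"
    and "\<forall>i\<in>{1..k}. \<forall>j\<in>{1..k}. i \<noteq> j \<longrightarrow> Es i \<inter> Es j = {}"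
    and "\<forall>i\<in>{1..k}. \<forall>C. maximal_clique (Vs i) (Es i) C \<longrightarrow> maximal_clique V E C"
    and "\<forall>i\<in>{1..k}. \<forall>C D. maximal_clique V E C \<and> clique (Vs i) (Es i) C \<and>
            maximal_clique V E D \<and> \<not> clique (Vs i) (Es i) D \<longrightarrow> card (C \<inter> D) \<le> 1"
  shows "(\<Sum>i=1..k. phylogeny_number (Vs i) (Es i)) \<le> phylogeny_number V E"
proof -
  define m where "m = phylogeny_number V E"
  obtain A where A: "phylo_digraph V E m A"
    using phylogeny_number_attained[OF assms(1)] unfolding m_def ..
  define Z where "Z i = subgraph_extras (Vs i) (Es i) m A" for i
  have "finite V" using assms(1) by (simp add: graph_def)
  have "phylogeny_number (Vs i) (Es i) \<le> card (Z i)" if i: "i \<in> {1..k}" for i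
  proof -
    have subgraph: "subgraph (Vs i) (Es i) V E" using assms(2) i by blast
    have "\<And>C. maximal_clique (Vs i) (Es i) C \<Longrightarrow> maximal_clique V E C"
      and "\<And>C D. maximal_clique V E C \<Longrightarrow> clique (Vs i) (Es i) C \<Longrightarrow> maximal_clique V E D \<Longrightarrow>
             \<not> clique (Vs i) (Es i) D \<Longrightarrow> card (C \<inter> D) \<le> 1"
      using assms(4,5) i by blast+
    with \<open>finite V\<close> subgraph
    have "\<And>Q e. clique V E Q \<Longrightarrow> e \<in> Es i \<Longrightarrow> e \<subseteq> Q \<Longrightarrow> clique (Vs i) (Es i) Q"
      by (rule clique_through_subgraph_edge)
    with A subgraph show ?thesis unfolding Z_def by (rule phylogeny_number_subgraph_le)
  qed
  then have "(\<Sum>i=1..k. phylogeny_number (Vs i) (Es i)) \<le> (\<Sum>i=1..k. card (Z i))"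
    by (rule sum_mono)
  also have "\<dots> = card (\<Union>i\<in>{1..k}. Z i)"
  proof (intro card_UN_disjoint[symmetric] ballI impI)
    fix i j assume "i \<in> {1..k}" "j \<in> {1..k}" "i \<noteq> j"
    then show "Z i \<inter> Z j = {}"
      unfolding Z_def using assms(2,3) by (intro subgraph_extras_disjoint) (auto simp: subgraph_def)
  qed (auto simp: Z_def subgraph_extras_def)
  also have "\<dots> \<le> card {..<m}"
    by (intro card_mono) (auto simp: Z_def subgraph_extras_def)
  finally show ?thesis by (simp add: m_def)
qed

end
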